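(* Let the parameters satisfy $\alpha\in(0,1]$, $\alpha_1,\alpha_2\in(0,2]$ and either (B1) $\alpha_1,\alpha_2\in(0,2)$, or (B2) $\alpha\in(0,1)$ with $\alpha_1\neq 2$ or $\alpha_2\neq 2$. Let $\mathcal{M},\mathcal{N}\subset\mathbb{R}^n$ be two manifolds that are $\mathcal{C}^k$-smooth ($k\geq 2$) around a point $\bar{x}\in\mathcal{M}\cap\mathcal{N}$, such that $\mathcal{M}\cap\mathcal{N}$ is a $\mathcal{C}^k$-smooth manifold around $\bar{x}$ and $\mathrm{T}_{\mathcal{M}\cap\mathcal{N}}(\bar{x})=\mathrm{T}_{\mathcal{M}}(\bar{x})\cap\mathrm{T}_{\mathcal{N}}(\bar{x})$. Then \[ \sigma(S_{\mathrm{T}(\bar{x})})\coloneqq\|S_{\mathrm{T}(\bar{x})}-\Pi_{\mathrm{T}_{\mathcal{M}}(\bar{x})\cap\mathrm{T}_{\mathcal{N}}(\bar{x})}\|<1, \] where $S_{\mathrm{T}(\bar{x})}=\alpha\,\Pi^{\alpha_2}_{\mathrm{T}_{\mathcal{M}}(\bar{x})}\Pi^{\alpha_1}_{\mathrm{T}_{\mathcal{N}}(\bar{x})}+(1-\alpha)I$.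
   Context: For a closed nonempty set $C$, $\Pi_C$ is the projection and $\Pi_C^{\alpha}\coloneqq(1-\alpha)I+\alpha\Pi_C$ is the relaxed projection; $\|\cdot\|$ is the operator norm. The tangent space of a manifold $\mathcal{M}$ locally defined by $\{x:F(x)=0\}$ ($F$ of class $\mathcal{C}^k$ with surjective derivative) is $\mathrm{T}_{\mathcal{M}}(x)=\ker \mathrm{J}F(x)$. *)

theory Defs
  imports "HOL-Analysis.Analysis"
begin

text \<open>C^k smoothness on a set U: there are iterated derivatives D j x [v1,...,vj]
  (the j-th Frechet derivative at x applied to v1,...,vj), with D 0 = F, each D (j+1)
  the Frechet derivative of D j (in x), for j < k, and D k continuous in x.\<close>
definition Ck_on :: "nat \<Rightarrow> 'a::real_normed_vector set \<Rightarrow> ('a \<Rightarrow> 'b::real_normed_vector) \<Rightarrow> bool" where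
  "Ck_on k U F \<longleftrightarrow>
     (\<exists>D :: nat \<Rightarrow> 'a \<Rightarrow> 'a list \<Rightarrow> 'b.
        (\<forall>x\<in>U. D 0 x [] = F x) \<and>
        (\<forall>j<k. \<forall>x\<in>U. \<forall>vs. length vs = j \<longrightarrow>
              ((\<lambda>y. D j y vs) has_derivative (\<lambda>v. D (Suc j) x (v # vs))) (at x)) \<and>
        (\<forall>vs. length vs = k \<longrightarrow> continuous_on U (\<lambda>y. D k y vs)))"

definition local_manifold_rep ::
  "nat \<Rightarrow> 'a::real_normed_vector set \<Rightarrow> 'a \<Rightarrow> 'a set \<Rightarrow> ('a \<Rightarrow> 'b::real_normed_vector) \<Rightarrow> ('a \<Rightarrow> 'b) \<Rightarrow> bool" where
  "local_manifold_rep k M xb U F F' \<longleftrightarrow>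
     open U \<and> xb \<in> U \<and> Ck_on k U F \<and>
     (\<forall>x\<in>U. \<exists>D. (F has_derivative D) (at x) \<and> surj D) \<and>
     (F has_derivative F') (at xb) \<and>
     M \<inter> U = {x\<in>U. F x = 0}"

text \<open>Tangent space = kernel of the Jacobian.\<close>
definition kernel :: "('a \<Rightarrow> 'b::zero) \<Rightarrow> 'a set" where
  "kernel L = {v. L v = 0}"

definition Proj :: "'a::{real_inner,heine_borel} set \<Rightarrow> 'a \<Rightarrow> 'a" where
  "Proj C = closest_point C"

definition relaxed_proj :: "real \<Rightarrow> 'a::{real_inner,heine_borel} set \<Rightarrow> 'a \<Rightarrow> 'a" where
  "relaxed_proj a C x = (1 - a) *\<^sub>R x + a *\<^sub>R Proj C x"

end

theory Submission
  imports Defs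
begin

text \<open>Only the two tangent spaces \<open>A = T\<^sub>M(xb)\<close> and \<open>B = T\<^sub>N(xb)\<close> matter: they are kernels
  of derivatives. The operator \<open>T = \<alpha> R\<^sub>2 R\<^sub>1 + (1 - \<alpha>) I\<close> is linear and fixes \<open>A \<inter> B\<close>, so
  \<open>(T - \<Pi>\<^sub>A\<^sub>\<inter>\<^sub>B) x = T d\<close> with \<open>d = x - \<Pi>\<^sub>A\<^sub>\<inter>\<^sub>B x\<close> orthogonal to \<open>A \<inter> B\<close>.
  A relaxed projection with parameter \<open>a \<in> [0, 2]\<close> shrinks \<open>\<parallel>x\<parallel>\<^sup>2\<close> by
  \<open>a (2 - a) dist(x, S)\<^sup>2\<close>, so \<open>T\<close> is nonexpansive, and if \<open>\<parallel>T d\<parallel> = \<parallel>d\<parallel>\<close> then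
  under (B1) both relaxed projections preserve the norm, forcing \<open>d \<in> B\<close> and \<open>d \<in> A\<close>;
  under (B2) strict convexity of the norm forces \<open>R\<^sub>2 R\<^sub>1 d = d\<close>, and the factor with
  parameter below 2 again places \<open>d\<close> in \<open>A \<inter> B\<close>. Hence \<open>\<parallel>T d\<parallel> < \<parallel>d\<parallel>\<close> for \<open>d \<noteq> 0\<close>,
  and compactness of the unit sphere turns this into an operator norm below 1.\<close>

lemma Proj_in:
  fixes S :: "'a::euclidean_space set"
  assumes "subspace S"
  shows "Proj S x \<in> S"
  unfolding Proj_def
  using assms closed_subspace subspace_0 by (blast intro: closest_point_in_set)

lemma orthogonal_Proj_residual:
  fixes S :: "'a::euclidean_space set"
  assumes S: "subspace S" and "y \<in> S"
  shows "orthogonal (x - Proj S x) y"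
proof -
  have "closed S" "convex S" using S closed_subspace subspace_imp_convex by auto
  have "Proj S x + y \<in> S" "Proj S x - y \<in> S"
    using S Proj_in \<open>y \<in> S\<close> subspace_add subspace_diff by blast+
  from closest_point_dot[OF \<open>convex S\<close> \<open>closed S\<close> this(1), of x]
       closest_point_dot[OF \<open>convex S\<close> \<open>closed S\<close> this(2), of x]
  show ?thesis
    unfolding Proj_def orthogonal_def by (simp add: inner_diff_right)
qed

lemma Proj_unique:
  fixes S :: "'a::euclidean_space set"
  assumes S: "subspace S" and "p \<in> S" and orth: "\<And>y. y \<in> S \<Longrightarrow> orthogonal (x - p) y"
  shows "Proj S x = p"
proof -
  have "Proj S x - p \<in> S" using S Proj_in \<open>p \<in> S\<close> subspace_diff by blast
  then have "orthogonal (x - p) (Proj S x - p)" "orthogonal (x - Proj S x) (Proj S x - p)"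
    using orth orthogonal_Proj_residual[OF S] by blast+
  then have "orthogonal (Proj S x - p) (Proj S x - p)"
    unfolding orthogonal_def by (simp add: inner_diff_left)
  then show ?thesis by (simp add: orthogonal_self)
qed

lemma linear_Proj:
  fixes S :: "'a::euclidean_space set"
  assumes S: "subspace S"
  shows "linear (Proj S)"
proof (rule linearI)
  fix x y :: 'a and c :: real
  show "Proj S (x + y) = Proj S x + Proj S y"
  proof (rule Proj_unique[OF S])
    show "Proj S x + Proj S y \<in> S" using S Proj_in subspace_add by blast
    fix z assume "z \<in> S"
    then have "orthogonal ((x - Proj S x) + (y - Proj S y)) z"
      using orthogonal_Proj_residual[OF S] by (simp add: orthogonal_clauses)
    then show "orthogonal (x + y - (Proj S x + Proj S y)) z" by (simp add: algebra_simps)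
  qed
  show "Proj S (c *\<^sub>R x) = c *\<^sub>R Proj S x"
    using subspace_scale[OF S Proj_in[OF S]] orthogonal_Proj_residual[OF S]
    by (intro Proj_unique[OF S]) (simp_all add: orthogonal_clauses flip: scaleR_diff_right)
qed

lemma Proj_eq_self_iff:
  fixes S :: "'a::euclidean_space set"
  assumes "subspace S"
  shows "Proj S x = x \<longleftrightarrow> x \<in> S"
  unfolding Proj_def using assms closed_subspace subspace_0 closest_point_refl by blast

lemma norm_Proj_Pythagorean:
  fixes S :: "'a::euclidean_space set"
  assumes S: "subspace S"
  shows "(norm x)\<^sup>2 = (norm (Proj S x))\<^sup>2 + (norm (x - Proj S x))\<^sup>2"
  using norm_add_Pythagorean[of "Proj S x" "x - Proj S x"]
    orthogonal_Proj_residual[OF S Proj_in[OF S]] by (simp add: orthogonal_commute)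

lemma relaxed_proj_self: "x \<in> S \<Longrightarrow> relaxed_proj a S x = x"
  unfolding relaxed_proj_def Proj_def by (simp add: closest_point_self scaleR_diff_left)

lemma relaxed_proj_eq_self_iff:
  fixes S :: "'a::euclidean_space set"
  assumes "subspace S" "a \<noteq> 0"
  shows "relaxed_proj a S x = x \<longleftrightarrow> x \<in> S"
proof -
  have "relaxed_proj a S x - x = a *\<^sub>R (Proj S x - x)"
    unfolding relaxed_proj_def by (simp add: algebra_simps)
  then show ?thesis using assms Proj_eq_self_iff by force
qed

lemma linear_relaxed_proj:
  fixes S :: "'a::euclidean_space set"
  assumes "subspace S"
  shows "linear (relaxed_proj a S)"
  using linear_Proj[OF assms] unfolding relaxed_proj_def
  by (intro linearI) (simp_all add: linear_add linear_scale algebra_simps)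

lemma norm_relaxed_proj_squared:
  fixes S :: "'a::euclidean_space set"
  assumes S: "subspace S"
  shows "(norm (relaxed_proj a S x))\<^sup>2 = (norm x)\<^sup>2 - a * (2 - a) * (norm (x - Proj S x))\<^sup>2"
proof -
  have orth: "orthogonal (Proj S x) ((1 - a) *\<^sub>R (x - Proj S x))"
    using orthogonal_Proj_residual[OF S Proj_in[OF S]] by (simp add: orthogonal_clauses orthogonal_commute)
  have "relaxed_proj a S x = Proj S x + (1 - a) *\<^sub>R (x - Proj S x)"
    unfolding relaxed_proj_def by (simp add: algebra_simps)
  then have "(norm (relaxed_proj a S x))\<^sup>2 = (norm (Proj S x))\<^sup>2 + (1 - a)\<^sup>2 * (norm (x - Proj S x))\<^sup>2"
    using norm_add_Pythagorean[OF orth] by (simp add: power_mult_distrib)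
  then show ?thesis
    using norm_Proj_Pythagorean[OF S, of x] by (simp add: power2_eq_square algebra_simps)
qed

lemma norm_relaxed_proj_le:
  fixes S :: "'a::euclidean_space set"
  assumes "subspace S" "0 \<le> a" "a \<le> 2"
  shows "norm (relaxed_proj a S x) \<le> norm x"
proof -
  have "(norm (relaxed_proj a S x))\<^sup>2 \<le> (norm x)\<^sup>2"
    using norm_relaxed_proj_squared[OF assms(1)] assms(2,3) by simp
  then show ?thesis by (simp add: power2_le_iff_abs_le)
qed

lemma relaxed_proj_norm_eq_imp_in:
  fixes S :: "'a::euclidean_space set"
  assumes "subspace S" "0 < a" "a < 2" "norm (relaxed_proj a S x) = norm x"
  shows "x \<in> S"
proof -
  have "a * (2 - a) * (norm (x - Proj S x))\<^sup>2 = 0"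
    using norm_relaxed_proj_squared[OF assms(1), of a x] assms(4) by simp
  then have "Proj S x = x" using assms(2,3) by simp
  then show ?thesis using Proj_eq_self_iff[OF assms(1)] by simp
qed

lemma convex_combination_norm_ge_imp_eq:
  fixes u d :: "'a::real_inner"
  assumes "0 < t" "t < 1" "norm u \<le> norm d" "norm d \<le> norm (t *\<^sub>R u + (1 - t) *\<^sub>R d)"
  shows "u = d"
proof -
  define w where "w = t *\<^sub>R u + (1 - t) *\<^sub>R d"
  have "(norm w)\<^sup>2 = t * (norm u)\<^sup>2 + (1 - t) * (norm d)\<^sup>2 - t * (1 - t) * (norm (u - d))\<^sup>2"
    unfolding w_def power2_norm_eq_inner by (simp add: inner_commute algebra_simps power2_eq_square)
  moreover have "(norm d)\<^sup>2 \<le> (norm w)\<^sup>2"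
    using assms(4) unfolding w_def by (simp add: power_mono)
  ultimately have "t * (1 - t) * (norm (u - d))\<^sup>2 \<le> t * ((norm u)\<^sup>2 - (norm d)\<^sup>2)"
    by (simp only: left_diff_distrib right_diff_distrib mult_1_left mult_1_right)
  also have "\<dots> \<le> 0"
    using assms(1,3) by (simp add: mult_nonneg_nonpos power_mono)
  finally have "norm (u - d) = 0"
    using assms(1,2) by (simp add: mult_le_0_iff)
  then show ?thesis by simp
qed

definition averaged_relaxed_proj ::
  "real \<Rightarrow> real \<Rightarrow> real \<Rightarrow> 'a::euclidean_space set \<Rightarrow> 'a set \<Rightarrow> 'a \<Rightarrow> 'a" where
  "averaged_relaxed_proj \<alpha> \<alpha>1 \<alpha>2 A B x =
     \<alpha> *\<^sub>R relaxed_proj \<alpha>2 A (relaxed_proj \<alpha>1 B x) + (1 - \<alpha>) *\<^sub>R x"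

lemma linear_averaged_relaxed_proj:
  assumes "subspace A" "subspace B"
  shows "linear (averaged_relaxed_proj \<alpha> \<alpha>1 \<alpha>2 A B)"
  using linear_relaxed_proj[OF assms(1)] linear_relaxed_proj[OF assms(2)]
  unfolding averaged_relaxed_proj_def
  by (intro linearI) (simp_all add: linear_add linear_scale algebra_simps)

lemma averaged_relaxed_proj_fixes_inter:
  "x \<in> A \<inter> B \<Longrightarrow> averaged_relaxed_proj \<alpha> \<alpha>1 \<alpha>2 A B x = x"
  unfolding averaged_relaxed_proj_def by (simp add: relaxed_proj_self algebra_simps)

lemma averaged_relaxed_proj_norm_ge_imp_in:
  fixes A B :: "'a::euclidean_space set"
  assumes A: "subspace A" and B: "subspace B"
    and "0 < \<alpha>" "\<alpha> \<le> 1" "0 < \<alpha>1" "\<alpha>1 \<le> 2" "0 < \<alpha>2" "\<alpha>2 \<le> 2"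
    and params: "(\<alpha>1 < 2 \<and> \<alpha>2 < 2) \<or> (\<alpha> < 1 \<and> (\<alpha>1 \<noteq> 2 \<or> \<alpha>2 \<noteq> 2))"
    and ge: "norm x \<le> norm (averaged_relaxed_proj \<alpha> \<alpha>1 \<alpha>2 A B x)"
  shows "x \<in> A \<inter> B"
proof -
  define e where "e = relaxed_proj \<alpha>1 B x"
  define u where "u = relaxed_proj \<alpha>2 A e"
  have e_le: "norm e \<le> norm x" unfolding e_def using B assms(5,6) by (simp add: norm_relaxed_proj_le)
  have u_le: "norm u \<le> norm e" unfolding u_def using A assms(7,8) by (simp add: norm_relaxed_proj_le)
  have ge_comb: "norm x \<le> norm (\<alpha> *\<^sub>R u + (1 - \<alpha>) *\<^sub>R x)"
    using ge unfolding averaged_relaxed_proj_def u_def e_def .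
  also have "\<dots> \<le> \<alpha> * norm u + (1 - \<alpha>) * norm x"
    using norm_triangle_ineq[of "\<alpha> *\<^sub>R u" "(1 - \<alpha>) *\<^sub>R x"] assms(3,4) by simp
  finally have "norm x \<le> norm u" using assms(3) by (simp add: algebra_simps)
  then have u_eq: "norm u = norm e" and e_eq: "norm e = norm x"
    using e_le u_le by linarith+
  show ?thesis
  proof (cases "\<alpha>1 < 2 \<and> \<alpha>2 < 2")
    case True
    then have "x \<in> B" using relaxed_proj_norm_eq_imp_in[OF B] assms(5) e_eq unfolding e_def by blast
    then have "e = x" unfolding e_def by (simp add: relaxed_proj_self)
    then have "x \<in> A" using relaxed_proj_norm_eq_imp_in[OF A] True assms(7) u_eq unfolding u_def by blast
    with \<open>x \<in> B\<close> show ?thesis by blast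
  next
    case False
    then have "\<alpha> < 1" and one_below_2: "\<alpha>1 < 2 \<or> \<alpha>2 < 2" using params assms(6,8) by auto
    have "u = x"
      using convex_combination_norm_ge_imp_eq[OF assms(3) \<open>\<alpha> < 1\<close> _ ge_comb] u_eq e_eq by simp
    consider "\<alpha>1 < 2" | "\<alpha>2 < 2" using one_below_2 by blast
    then show ?thesis
    proof cases
      case 1
      then have "x \<in> B" using relaxed_proj_norm_eq_imp_in[OF B] assms(5) e_eq unfolding e_def by blast
      then have "relaxed_proj \<alpha>2 A x = x" using \<open>u = x\<close> unfolding u_def e_def by (simp add: relaxed_proj_self)
      then have "x \<in> A" using relaxed_proj_eq_self_iff[OF A] assms(7) by simp
      with \<open>x \<in> B\<close> show ?thesis by blast
    next
      case 2
      then have "e \<in> A" using relaxed_proj_norm_eq_imp_in[OF A] assms(7) u_eq unfolding u_def by blast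
      then have "e = x" using \<open>u = x\<close> unfolding u_def by (simp add: relaxed_proj_self)
      then have "x \<in> B" using relaxed_proj_eq_self_iff[OF B] assms(5) unfolding e_def by simp
      with \<open>e \<in> A\<close> \<open>e = x\<close> show ?thesis by blast
    qed
  qed
qed

lemma onorm_less_one:
  fixes L :: "'a::euclidean_space \<Rightarrow> 'b::real_normed_vector"
  assumes L: "linear L" and contr: "\<And>x. x \<noteq> 0 \<Longrightarrow> norm (L x) < norm x"
  shows "onorm L < 1"
proof -
  have "continuous_on (sphere 0 1) (\<lambda>x. norm (L x))"
    using L by (intro continuous_on_norm linear_continuous_on) (simp add: linear_conv_bounded_linear)
  then have "\<exists>x0\<in>sphere 0 1. \<forall>y\<in>sphere 0 1. norm (L y) \<le> norm (L x0)"
    by (intro continuous_attains_sup[OF compact_sphere]) auto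
  then obtain x0 where x0: "x0 \<in> sphere 0 1"
    and x0_max: "\<And>y. y \<in> sphere 0 1 \<Longrightarrow> norm (L y) \<le> norm (L x0)"
    by blast
  have "onorm L \<le> norm (L x0)"
  proof (rule onorm_le)
    fix x :: 'a
    show "norm (L x) \<le> norm (L x0) * norm x"
    proof (cases "x = 0")
      case True
      then show ?thesis using linear_0[OF L] by simp
    next
      case False
      have "norm (L (x /\<^sub>R norm x)) \<le> norm (L x0)"
        using False by (intro x0_max) simp
      then show ?thesis using False by (simp add: linear_scale[OF L] field_simps)
    qed
  qed
  also have "\<dots> < 1" using contr[of x0] x0 by fastforce
  finally show ?thesis .
qed

lemma onorm_averaged_relaxed_proj_minus_Proj_less_one:
  fixes A B :: "'a::euclidean_space set"
  assumes A: "subspace A" and B: "subspace B"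
    and "0 < \<alpha>" "\<alpha> \<le> 1" "0 < \<alpha>1" "\<alpha>1 \<le> 2" "0 < \<alpha>2" "\<alpha>2 \<le> 2"
    and "(\<alpha>1 < 2 \<and> \<alpha>2 < 2) \<or> (\<alpha> < 1 \<and> (\<alpha>1 \<noteq> 2 \<or> \<alpha>2 \<noteq> 2))"
  shows "onorm (\<lambda>x. averaged_relaxed_proj \<alpha> \<alpha>1 \<alpha>2 A B x - Proj (A \<inter> B) x) < 1"
proof (rule onorm_less_one)
  let ?T = "averaged_relaxed_proj \<alpha> \<alpha>1 \<alpha>2 A B"
  have AB: "subspace (A \<inter> B)" using A B subspace_inter by blast
  show "linear (\<lambda>x. ?T x - Proj (A \<inter> B) x)"
    using linear_averaged_relaxed_proj[OF A B] linear_Proj[OF AB] by (rule linear_compose_sub)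
  fix x :: 'a
  assume "x \<noteq> 0"
  define d where "d = x - Proj (A \<inter> B) x"
  have "?T x = ?T (Proj (A \<inter> B) x) + ?T d"
    unfolding d_def by (simp flip: linear_add[OF linear_averaged_relaxed_proj[OF A B]])
  then have Td: "?T x - Proj (A \<inter> B) x = ?T d"
    using averaged_relaxed_proj_fixes_inter[OF Proj_in[OF AB]] by simp
  have "(norm x)\<^sup>2 = (norm (Proj (A \<inter> B) x))\<^sup>2 + (norm d)\<^sup>2"
    unfolding d_def by (rule norm_Proj_Pythagorean[OF AB])
  then have "(norm d)\<^sup>2 \<le> (norm x)\<^sup>2" by simp
  then have "norm d \<le> norm x" by (simp add: power2_le_iff_abs_le)
  show "norm (?T x - Proj (A \<inter> B) x) < norm x"
  proof (cases "d = 0")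
    case True
    then show ?thesis using Td \<open>x \<noteq> 0\<close> linear_0[OF linear_averaged_relaxed_proj[OF A B]] by simp
  next
    case False
    have "d \<notin> A \<inter> B"
    proof
      assume "d \<in> A \<inter> B"
      from orthogonal_Proj_residual[OF AB this, of x] have "orthogonal d d"
        unfolding d_def[symmetric] .
      with False show False by (simp add: orthogonal_self)
    qed
    then have "norm (?T d) < norm d"
      using averaged_relaxed_proj_norm_ge_imp_in[OF A B assms(3-9)] by force
    with Td \<open>norm d \<le> norm x\<close> show ?thesis by simp
  qed
qed

theorem lemma6:
  fixes \<alpha> \<alpha>1 \<alpha>2 :: real and k :: nat
    and M N :: "(real ^ 'n) set" and xb :: "real ^ 'n"
    and U\<^sub>M U\<^sub>N U\<^sub>M\<^sub>N :: "(real ^ 'n) set"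
    and FM :: "real ^ 'n \<Rightarrow> 'm::euclidean_space" and FM' :: "real ^ 'n \<Rightarrow> 'm"
    and FN :: "real ^ 'n \<Rightarrow> 'p::euclidean_space" and FN' :: "real ^ 'n \<Rightarrow> 'p"
    and FMN :: "real ^ 'n \<Rightarrow> 'q::euclidean_space" and FMN' :: "real ^ 'n \<Rightarrow> 'q"
  assumes "0 < \<alpha>" "\<alpha> \<le> 1" "0 < \<alpha>1" "\<alpha>1 \<le> 2" "0 < \<alpha>2" "\<alpha>2 \<le> 2"
    and "(\<alpha>1 < 2 \<and> \<alpha>2 < 2) \<or> (\<alpha> < 1 \<and> (\<alpha>1 \<noteq> 2 \<or> \<alpha>2 \<noteq> 2))"
    and "k \<ge> 2"
    and "xb \<in> M \<inter> N"
    and "local_manifold_rep k M xb U\<^sub>M FM FM'"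
    and "local_manifold_rep k N xb U\<^sub>N FN FN'"
    and "local_manifold_rep k (M \<inter> N) xb U\<^sub>M\<^sub>N FMN FMN'"
    and "kernel FMN' = kernel FM' \<inter> kernel FN'"
  shows "onorm (\<lambda>x. (\<alpha> *\<^sub>R relaxed_proj \<alpha>2 (kernel FM') (relaxed_proj \<alpha>1 (kernel FN') x)
                      + (1 - \<alpha>) *\<^sub>R x)
                    - Proj (kernel FM' \<inter> kernel FN') x) < 1"
proof -
  have "linear FM'" "linear FN'"
    using assms(10,11) has_derivative_linear unfolding local_manifold_rep_def by blast+
  then have "subspace (kernel FM')" "subspace (kernel FN')"
    unfolding kernel_def by (simp_all add: linear_subspace_kernel)
  from onorm_averaged_relaxed_proj_minus_Proj_less_one[OF this assms(1-7)]
  show ?thesis unfolding averaged_relaxed_proj_def .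
qed

end
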